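(* Impose (A1)–(A6) and (A8') and fix $x\in\mathcal X$, $u\in[0,1]$. Then $\underline\Lambda(x,u)\le\Delta^{OO}_{Y^*}(x,u)\le\overline\Lambda(x,u)$, where (all functions at $(x,u)$): (i) under (A7.1): $\underline\Lambda=\frac{m_1^Y}{m_1^S}-\frac{m_0^Y-\underline y^*(-\Delta_S)}{m_1^S}$ and $\overline\Lambda=\frac{m_1^Y}{m_1^S}-\underline y^*$; (ii) under (A7.2): $\underline\Lambda=\frac{m_1^Y}{m_1^S}-\overline y^*$ and $\overline\Lambda=\frac{m_1^Y}{m_1^S}-\frac{m_0^Y-\overline y^*(-\Delta_S)}{m_1^S}$; (iii) under (A7.3) (sub-case (a) or (b)): $\underline\Lambda=\frac{m_1^Y}{m_1^S}-\min\left\{\frac{m_0^Y-\underline y^*(-\Delta_S)}{m_1^S},\overline y^*\right\}$ and $\overline\Lambda=\frac{m_1^Y}{m_1^S}-\max\left\{\frac{m_0^Y-\overline y^*(-\Delta_S)}{m_1^S},\underline y^*\right\}$.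
   Context: Standing setup. On a common probability space: $X$ (covariates, support $\mathcal X$), $Z$ (instrument, support $\mathcal Z$), $W=(X,Z)$; latent real random variables $U,V$, jointly continuously distributed conditional on $X$, with $U\mid X$ and $V\mid X$ each Uniform$[0,1]$ (their joint dependence unrestricted); real potential outcomes of interest $Y_0^*,Y_1^*$. Given functions $P:\mathcal X\times\mathcal Z\to[0,1]$ and $Q:\{0,1\}\times\mathcal X\to[0,1]$, define the treatment $D=\mathbf 1\{P(W)\ge U\}$, potential selection indicators $S_d=\mathbf 1\{Q(d,X)\ge V\}$ ($d\in\{0,1\}$), selection indicator $S=DS_1+(1-D)S_0$, potential observable outcomes $Y_d=S_dY_d^*$ and observable outcome $Y=DY_1+(1-D)Y_0$. For $x\in\mathcal X$, $u\in[0,1]$, $d\in\{0,1\}$: $m_d^Y(x,u)=\mathbb E[Y_d\mid X=x,U=u]$, $m_d^S(x,u)=\mathbb E[S_d\mid X=x,U=u]$, $\Delta_S(x,u)=m_1^S(x,u)-m_0^S(x,u)$, and $\Delta^{OO}_{Y^*}(x,u)=\mathbb E[Y_1^*-Y_0^*\mid X=x,U=u,S_0=1,S_1=1]$. Ratios appearing are assumed well defined (nonzero denominators). Assumptions: (A1) $Z$ is independent of $(U,V,Y_0^*,Y_1^* )$ conditional on $X$; (A2) the distribution of $P(W)$ given $X$ is nondegenerate; (A3) $\mathbb E|Y_d^*|<\infty$ and $\mathbb E[(Y_d^* )^2]<\infty$; (A4) $0<\mathbb P[D=1\mid X]<1$; (A5) $X$ is invariant to counterfactual manipulation of treatment; (A6)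 $Y_0^*,Y_1^*$ have a common support $\mathcal Y^*\subseteq\mathbb R$; $\underline y^*=\inf\mathcal Y^*$, $\overline y^*=\sup\mathcal Y^*$ (possibly infinite), known. Support cases: (A7.1) $\underline y^*>-\infty$, $\overline y^*=+\infty$, $\mathcal Y^*$ an interval; (A7.2) $\underline y^*=-\infty$, $\overline y^*<\infty$, $\mathcal Y^*$ an interval; (A7.3) both finite and either (a) $\mathcal Y^*$ an interval or (b) $\underline y^*,\overline y^*\in\mathcal Y^*$. (A8') (negative effect on selection) $Q(0,x)>Q(1,x)>0$ for all $x\in\mathcal X$. *)

theory Defs
  imports "HOL-Probability.Probability"
begin

text \<open>
  K x u is the conditional probability
  measure given X = x, U = u (a regular conditional probability on the sample
  space).  V is the latent selection variable, Ystar d is the potential outcome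
  of interest Y_d^*, Q d x is the selection threshold Q(d,x) for d in {0,1}.
\<close>

definition Spot :: "(nat \<Rightarrow> 'x \<Rightarrow> real) \<Rightarrow> ('a \<Rightarrow> real) \<Rightarrow> nat \<Rightarrow> 'x \<Rightarrow> 'a \<Rightarrow> real" where
  "Spot Q V d x \<omega> = (if Q d x \<ge> V \<omega> then 1 else 0)"

text \<open>m_d^Y(x,u) = E[Y_d | X=x,U=u] with Y_d = S_d Y_d^*\<close>
definition mY :: "('x \<Rightarrow> real \<Rightarrow> 'a measure) \<Rightarrow> (nat \<Rightarrow> 'x \<Rightarrow> real) \<Rightarrow> ('a \<Rightarrow> real)
    \<Rightarrow> (nat \<Rightarrow> 'a \<Rightarrow> real) \<Rightarrow> nat \<Rightarrow> 'x \<Rightarrow> real \<Rightarrow> real" where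
  "mY K Q V Ystar d x u = (\<integral>\<omega>. Spot Q V d x \<omega> * Ystar d \<omega> \<partial>(K x u))"

definition mS :: "('x \<Rightarrow> real \<Rightarrow> 'a measure) \<Rightarrow> (nat \<Rightarrow> 'x \<Rightarrow> real) \<Rightarrow> ('a \<Rightarrow> real)
    \<Rightarrow> nat \<Rightarrow> 'x \<Rightarrow> real \<Rightarrow> real" where
  "mS K Q V d x u = (\<integral>\<omega>. Spot Q V d x \<omega> \<partial>(K x u))"

definition DeltaS :: "('x \<Rightarrow> real \<Rightarrow> 'a measure) \<Rightarrow> (nat \<Rightarrow> 'x \<Rightarrow> real) \<Rightarrow> ('a \<Rightarrow> real)
    \<Rightarrow> 'x \<Rightarrow> real \<Rightarrow> real" where
  "DeltaS K Q V x u = mS K Q V 1 x u - mS K Q V 0 x u"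

definition pOO :: "('x \<Rightarrow> real \<Rightarrow> 'a measure) \<Rightarrow> (nat \<Rightarrow> 'x \<Rightarrow> real) \<Rightarrow> ('a \<Rightarrow> real)
    \<Rightarrow> 'x \<Rightarrow> real \<Rightarrow> real" where
  "pOO K Q V x u = (\<integral>\<omega>. Spot Q V 0 x \<omega> * Spot Q V 1 x \<omega> \<partial>(K x u))"

text \<open>Delta^{OO}_{Y^*}(x,u) = E[Y_1^* - Y_0^* | X=x, U=u, S_0=1, S_1=1]
  (elementary conditional expectation given an event of positive probability)\<close>
definition DeltaOO :: "('x \<Rightarrow> real \<Rightarrow> 'a measure) \<Rightarrow> (nat \<Rightarrow> 'x \<Rightarrow> real) \<Rightarrow> ('a \<Rightarrow> real)
    \<Rightarrow> (nat \<Rightarrow> 'a \<Rightarrow> real) \<Rightarrow> 'x \<Rightarrow> real \<Rightarrow> real" where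
  "DeltaOO K Q V Ystar x u =
     (\<integral>\<omega>. Spot Q V 0 x \<omega> * Spot Q V 1 x \<omega> * (Ystar 1 \<omega> - Ystar 0 \<omega>) \<partial>(K x u))
     / pOO K Q V x u"

end

theory Submission
  imports Defs
begin

text \<open>
  Under a negative effect on selection, \<open>Q 1 x < Q 0 x\<close>, every unit selected under treatment is
  also selected without it, so \<open>S\<^sub>1 \<le> S\<^sub>0\<close>. Hence the always-observed event is \<open>{S\<^sub>1 = 1}\<close> and
  \<open>\<Delta>\<^sup>O\<^sup>O = (m\<^sub>1\<^sup>Y - E[S\<^sub>1 Y\<^sub>0\<^sup>*]) / m\<^sub>1\<^sup>S\<close>. The only unidentified quantity \<open>E[S\<^sub>1 Y\<^sub>0\<^sup>*]\<close> is
  constrained twice by any bound \<open>c\<close> on the support of \<open>Y\<^sub>0\<^sup>*\<close>: directly, since it is a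
  \<open>S\<^sub>1\<close>-weighted mean of \<open>Y\<^sub>0\<^sup>*\<close> compared with \<open>c m\<^sub>1\<^sup>S\<close>, and through its complement
  \<open>m\<^sub>0\<^sup>Y - E[S\<^sub>1 Y\<^sub>0\<^sup>*] = E[(S\<^sub>0 - S\<^sub>1) Y\<^sub>0\<^sup>*]\<close>, compared with \<open>c (-\<Delta>\<^sub>S)\<close>. A lower support bound
  thus gives one bound on each side of \<open>\<Delta>\<^sup>O\<^sup>O\<close>, an upper one the reverse pair, and with both
  endpoints finite the better of each pair is taken.
\<close>

lemma integrable_mult_unit_weight:
  fixes f Y :: "'a \<Rightarrow> real"
  assumes "integrable M Y" "f \<in> borel_measurable M" "\<And>\<omega>. \<bar>f \<omega>\<bar> \<le> 1"
  shows "integrable M (\<lambda>\<omega>. f \<omega> * Y \<omega>)"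
proof (rule Bochner_Integration.integrable_bound[OF assms(1)])
  show "(\<lambda>\<omega>. f \<omega> * Y \<omega>) \<in> borel_measurable M"
    using assms by measurable
  show "AE \<omega> in M. norm (f \<omega> * Y \<omega>) \<le> norm (Y \<omega>)"
    using assms(3) by (auto simp: abs_mult intro!: AE_I2 mult_left_le_one_le)
qed

lemma (in finite_measure) integral_weighted_ge:
  fixes f Y :: "'a \<Rightarrow> real"
  assumes "integrable M Y" "f \<in> borel_measurable M" "\<And>\<omega>. f \<omega> \<in> {0..1}"
    and "AE \<omega> in M. c \<le> Y \<omega>"
  shows "c * (\<integral>\<omega>. f \<omega> \<partial>M) \<le> (\<integral>\<omega>. f \<omega> * Y \<omega> \<partial>M)"
proof -
  have "integrable M f"
    using assms(2,3) by (intro integrable_const_bound[where B=1]) auto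
  moreover have "integrable M (\<lambda>\<omega>. f \<omega> * Y \<omega>)"
    using assms(3) by (intro integrable_mult_unit_weight[OF assms(1,2)]) auto
  moreover have "c * f \<omega> \<le> f \<omega> * Y \<omega>" if "c \<le> Y \<omega>" for \<omega>
    using that assms(3)[of \<omega>] by (simp add: mult.commute mult_right_mono)
  then have "AE \<omega> in M. c * f \<omega> \<le> f \<omega> * Y \<omega>"
    using assms(4) by (auto elim: eventually_mono)
  ultimately show ?thesis
    using integral_mono_AE[of M "\<lambda>\<omega>. c * f \<omega>"] by simp
qed

lemma (in finite_measure) integral_weighted_le:
  fixes f Y :: "'a \<Rightarrow> real"
  assumes "integrable M Y" "f \<in> borel_measurable M" "\<And>\<omega>. f \<omega> \<in> {0..1}"
    and "AE \<omega> in M. Y \<omega> \<le> c"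
  shows "(\<integral>\<omega>. f \<omega> * Y \<omega> \<partial>M) \<le> c * (\<integral>\<omega>. f \<omega> \<partial>M)"
  using integral_weighted_ge[of "\<lambda>\<omega>. - Y \<omega>" f "- c"] assms by simp

lemma AE_ge_Inf_ereal:
  assumes "AE \<omega> in M. Y \<omega> \<in> S" "Inf (ereal ` S) = ereal c"
  shows "AE \<omega> in M. c \<le> Y \<omega>"
  using assms(1) by eventually_elim (metis INF_lower assms(2) ereal_less_eq(3))

lemma AE_le_Sup_ereal:
  assumes "AE \<omega> in M. Y \<omega> \<in> S" "Sup (ereal ` S) = ereal c"
  shows "AE \<omega> in M. Y \<omega> \<le> c"
  using assms(1) by eventually_elim (metis SUP_upper assms(2) ereal_less_eq(3))

lemma (in prob_space) AE_support_nonempty: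
  "AE \<omega> in M. Y \<omega> \<in> S \<Longrightarrow> S \<noteq> {}"
  using AE_False by auto

lemma Inf_ereal_image_neq_PInf:
  assumes "y \<in> S" shows "Inf (ereal ` S) \<noteq> \<infinity>"
proof -
  have "Inf (ereal ` S) \<le> ereal y"
    using assms by (rule INF_lower)
  then show ?thesis by auto
qed

lemma Sup_ereal_image_neq_MInf:
  assumes "y \<in> S" shows "Sup (ereal ` S) \<noteq> -\<infinity>"
proof -
  have "ereal y \<le> Sup (ereal ` S)"
    using assms by (rule SUP_upper)
  then show ?thesis by auto
qed

lemma Spot_range: "Spot Q V d x \<omega> \<in> {0..1}"
  by (simp add: Spot_def)

lemma Spot_diff_range:
  "Q d x \<le> Q d' x \<Longrightarrow> Spot Q V d' x \<omega> - Spot Q V d x \<omega> \<in> {0..1}"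
  by (simp add: Spot_def)

lemma Spot_mult_Spot_of_le:
  "Q d x \<le> Q d' x \<Longrightarrow> Spot Q V d' x \<omega> * Spot Q V d x \<omega> = Spot Q V d x \<omega>"
  by (simp add: Spot_def)

lemma Spot_measurable:
  "V \<in> borel_measurable M \<Longrightarrow> Spot Q V d x \<in> borel_measurable M"
  unfolding Spot_def[abs_def] by measurable

context
  fixes K :: "'x \<Rightarrow> real \<Rightarrow> 'a measure" and Q :: "nat \<Rightarrow> 'x \<Rightarrow> real"
    and V :: "'a \<Rightarrow> real" and Ystar :: "nat \<Rightarrow> 'a \<Rightarrow> real" and x :: 'x and u :: real
  assumes prob: "prob_space (K x u)"
    and V_meas: "V \<in> borel_measurable (K x u)"
    and selection_mono: "Q 1 x \<le> Q 0 x"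
    and Y0_int: "integrable (K x u) (Ystar 0)"
    and Y1_int: "integrable (K x u) (Ystar 1)"
begin

private lemma finite_measure_K: "finite_measure (K x u)"
  using prob by (rule prob_space.finite_measure)

private lemma Spot_mult_integrable:
  "integrable (K x u) Y \<Longrightarrow> integrable (K x u) (\<lambda>\<omega>. Spot Q V d x \<omega> * Y \<omega>)"
  by (rule integrable_mult_unit_weight[OF _ Spot_measurable[OF V_meas]]) (simp_all add: Spot_def)

private lemma Spot_integrable: "integrable (K x u) (Spot Q V d x)"
  by (rule finite_measure.integrable_const_bound[OF finite_measure_K, where B=1])
    (simp_all add: Spot_measurable[OF V_meas], simp add: Spot_def)

private lemma Spot0_mult_Spot1: "Spot Q V 0 x \<omega> * Spot Q V 1 x \<omega> = Spot Q V 1 x \<omega>"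
  by (rule Spot_mult_Spot_of_le[of Q 1 x 0, OF selection_mono])

lemma pOO_eq_mS1: "pOO K Q V x u = mS K Q V 1 x u"
  unfolding pOO_def mS_def Spot0_mult_Spot1 ..

lemma DeltaOO_eq:
  "DeltaOO K Q V Ystar x u
     = (mY K Q V Ystar 1 x u - (\<integral>\<omega>. Spot Q V 1 x \<omega> * Ystar 0 \<omega> \<partial>K x u)) / mS K Q V 1 x u"
proof -
  have "(\<lambda>\<omega>. Spot Q V 0 x \<omega> * Spot Q V 1 x \<omega> * (Ystar 1 \<omega> - Ystar 0 \<omega>))
      = (\<lambda>\<omega>. Spot Q V 1 x \<omega> * Ystar 1 \<omega> - Spot Q V 1 x \<omega> * Ystar 0 \<omega>)"
    by (simp only: Spot0_mult_Spot1 right_diff_distrib)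
  then show ?thesis
    using Spot_mult_integrable[OF Y0_int] Spot_mult_integrable[OF Y1_int]
    by (simp add: DeltaOO_def pOO_eq_mS1 mY_def)
qed

lemma mY0_minus_selected_eq:
  "mY K Q V Ystar 0 x u - (\<integral>\<omega>. Spot Q V 1 x \<omega> * Ystar 0 \<omega> \<partial>K x u)
     = (\<integral>\<omega>. (Spot Q V 0 x \<omega> - Spot Q V 1 x \<omega>) * Ystar 0 \<omega> \<partial>K x u)"
  using Spot_mult_integrable[OF Y0_int] by (simp add: mY_def left_diff_distrib)

lemma minus_DeltaS_eq: "- DeltaS K Q V x u = (\<integral>\<omega>. Spot Q V 0 x \<omega> - Spot Q V 1 x \<omega> \<partial>K x u)"
  using Spot_integrable by (simp add: DeltaS_def mS_def)

private lemma mS1_pos: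
  assumes "pOO K Q V x u \<noteq> 0" shows "mS K Q V 1 x u > 0"
proof -
  have "mS K Q V 1 x u \<ge> 0"
    unfolding mS_def by (rule Bochner_Integration.integral_nonneg) (simp add: Spot_def)
  then show ?thesis
    using assms by (simp add: pOO_eq_mS1)
qed

lemma selected_integral_bounds_of_AE_ge:
  assumes lower: "AE \<omega> in K x u. c \<le> Ystar 0 \<omega>"
  shows "c * mS K Q V 1 x u \<le> (\<integral>\<omega>. Spot Q V 1 x \<omega> * Ystar 0 \<omega> \<partial>K x u)"
    and "c * (- DeltaS K Q V x u)
           \<le> mY K Q V Ystar 0 x u - (\<integral>\<omega>. Spot Q V 1 x \<omega> * Ystar 0 \<omega> \<partial>K x u)"
  unfolding mS_def mY0_minus_selected_eq minus_DeltaS_eq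
  by (rule finite_measure.integral_weighted_ge[OF finite_measure_K Y0_int
         Spot_measurable[OF V_meas] Spot_range lower],
       rule finite_measure.integral_weighted_ge[OF finite_measure_K Y0_int
         borel_measurable_diff[OF Spot_measurable[OF V_meas] Spot_measurable[OF V_meas]]
         Spot_diff_range[of Q 1 x 0, OF selection_mono] lower])

lemma selected_integral_bounds_of_AE_le:
  assumes upper: "AE \<omega> in K x u. Ystar 0 \<omega> \<le> c"
  shows "(\<integral>\<omega>. Spot Q V 1 x \<omega> * Ystar 0 \<omega> \<partial>K x u) \<le> c * mS K Q V 1 x u"
    and "mY K Q V Ystar 0 x u - (\<integral>\<omega>. Spot Q V 1 x \<omega> * Ystar 0 \<omega> \<partial>K x u)
           \<le> c * (- DeltaS K Q V x u)"
  unfolding mS_def mY0_minus_selected_eq minus_DeltaS_eq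
  by (rule finite_measure.integral_weighted_le[OF finite_measure_K Y0_int
         Spot_measurable[OF V_meas] Spot_range upper],
       rule finite_measure.integral_weighted_le[OF finite_measure_K Y0_int
         borel_measurable_diff[OF Spot_measurable[OF V_meas] Spot_measurable[OF V_meas]]
         Spot_diff_range[of Q 1 x 0, OF selection_mono] upper])

lemma DeltaOO_bounds_of_AE_ge:
  assumes "pOO K Q V x u \<noteq> 0" and "AE \<omega> in K x u. c \<le> Ystar 0 \<omega>"
  shows "mY K Q V Ystar 1 x u / mS K Q V 1 x u
           - (mY K Q V Ystar 0 x u - c * (- DeltaS K Q V x u)) / mS K Q V 1 x u
           \<le> DeltaOO K Q V Ystar x u"
    and "DeltaOO K Q V Ystar x u \<le> mY K Q V Ystar 1 x u / mS K Q V 1 x u - c"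
  using selected_integral_bounds_of_AE_ge[OF assms(2)] mS1_pos[OF assms(1)]
  unfolding DeltaOO_eq by (simp_all add: divide_simps)

lemma DeltaOO_bounds_of_AE_le:
  assumes "pOO K Q V x u \<noteq> 0" and "AE \<omega> in K x u. Ystar 0 \<omega> \<le> c"
  shows "mY K Q V Ystar 1 x u / mS K Q V 1 x u - c \<le> DeltaOO K Q V Ystar x u"
    and "DeltaOO K Q V Ystar x u
           \<le> mY K Q V Ystar 1 x u / mS K Q V 1 x u
              - (mY K Q V Ystar 0 x u - c * (- DeltaS K Q V x u)) / mS K Q V 1 x u"
  using selected_integral_bounds_of_AE_le[OF assms(2)] mS1_pos[OF assms(1)]
  unfolding DeltaOO_eq by (simp_all add: divide_simps)

end

theorem corollaryC1:
  fixes K :: "'x \<Rightarrow> real \<Rightarrow> 'a measure"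
    and Q :: "nat \<Rightarrow> 'x \<Rightarrow> real"
    and V :: "'a \<Rightarrow> real"
    and Ystar :: "nat \<Rightarrow> 'a \<Rightarrow> real"
    and Ysup :: "real set"
    and XX :: "'x set"
    and x :: 'x and u :: real
  defines "ylo \<equiv> Inf (ereal ` Ysup)"
    and "yhi \<equiv> Sup (ereal ` Ysup)"
  assumes x_in: "x \<in> XX" and u_in: "u \<in> {0..1}"
    and Q_range: "\<forall>d\<in>{0,1}. \<forall>x'\<in>XX. Q d x' \<in> {0..1}"
    and A8': "\<forall>x'\<in>XX. Q 0 x' > Q 1 x' \<and> Q 1 x' > 0"
    and prob: "prob_space (K x u)"
    and V_meas: "V \<in> borel_measurable (K x u)"
    and A3: "\<forall>d\<in>{0,1}. integrable (K x u) (Ystar d) \<and> integrable (K x u) (\<lambda>\<omega>. (Ystar d \<omega>)\<^sup>2)"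
    and A6: "\<forall>d\<in>{0,1}. AE \<omega> in K x u. Ystar d \<omega> \<in> Ysup"
    and mS1_nz: "mS K Q V 1 x u \<noteq> 0"
    and pOO_nz: "pOO K Q V x u \<noteq> 0"
  shows
    "(ylo \<noteq> -\<infinity> \<and> yhi = \<infinity> \<and> is_interval Ysup \<longrightarrow>
        mY K Q V Ystar 1 x u / mS K Q V 1 x u
          - (mY K Q V Ystar 0 x u - real_of_ereal ylo * (- DeltaS K Q V x u)) / mS K Q V 1 x u
          \<le> DeltaOO K Q V Ystar x u
        \<and> DeltaOO K Q V Ystar x u
          \<le> mY K Q V Ystar 1 x u / mS K Q V 1 x u - real_of_ereal ylo)
   \<and> (ylo = -\<infinity> \<and> yhi \<noteq> \<infinity> \<and> is_interval Ysup \<longrightarrow>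
        mY K Q V Ystar 1 x u / mS K Q V 1 x u - real_of_ereal yhi
          \<le> DeltaOO K Q V Ystar x u
        \<and> DeltaOO K Q V Ystar x u
          \<le> mY K Q V Ystar 1 x u / mS K Q V 1 x u
             - (mY K Q V Ystar 0 x u - real_of_ereal yhi * (- DeltaS K Q V x u)) / mS K Q V 1 x u)
   \<and> (\<bar>ylo\<bar> \<noteq> \<infinity> \<and> \<bar>yhi\<bar> \<noteq> \<infinity>
        \<and> (is_interval Ysup \<or> (real_of_ereal ylo \<in> Ysup \<and> real_of_ereal yhi \<in> Ysup)) \<longrightarrow>
        mY K Q V Ystar 1 x u / mS K Q V 1 x u
          - min ((mY K Q V Ystar 0 x u - real_of_ereal ylo * (- DeltaS K Q V x u)) / mS K Q V 1 x u)
                (real_of_ereal yhi)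
          \<le> DeltaOO K Q V Ystar x u
        \<and> DeltaOO K Q V Ystar x u
          \<le> mY K Q V Ystar 1 x u / mS K Q V 1 x u
             - max ((mY K Q V Ystar 0 x u - real_of_ereal yhi * (- DeltaS K Q V x u)) / mS K Q V 1 x u)
                   (real_of_ereal ylo))"
proof -
  have sel: "Q 1 x \<le> Q 0 x"
    using A8' x_in by (simp add: less_imp_le)
  have Y_int: "integrable (K x u) (Ystar 0)" "integrable (K x u) (Ystar 1)"
    using A3 by auto
  have Y0_supp: "AE \<omega> in K x u. Ystar 0 \<omega> \<in> Ysup"
    using A6 by auto
  then obtain y where "y \<in> Ysup"
    using prob_space.AE_support_nonempty[OF prob] by blast
  then have "ylo \<noteq> \<infinity>" "yhi \<noteq> -\<infinity>"
    unfolding ylo_def yhi_def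
    by (simp_all add: Inf_ereal_image_neq_PInf Sup_ereal_image_neq_MInf)
  then have ylo: "ylo \<noteq> -\<infinity> \<Longrightarrow> ylo = ereal (real_of_ereal ylo)"
    and yhi: "yhi \<noteq> \<infinity> \<Longrightarrow> yhi = ereal (real_of_ereal yhi)"
    by (cases ylo; cases yhi; simp)+
  note lower = DeltaOO_bounds_of_AE_ge[OF prob V_meas sel Y_int pOO_nz
      AE_ge_Inf_ereal[OF Y0_supp ylo[unfolded ylo_def]]]
  note upper = DeltaOO_bounds_of_AE_le[OF prob V_meas sel Y_int pOO_nz
      AE_le_Sup_ereal[OF Y0_supp yhi[unfolded yhi_def]]]
  show ?thesis
    using lower upper unfolding ylo_def[symmetric] yhi_def[symmetric]
    by (auto simp: min_def max_def)
qed

end
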